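(* Suppose that $\ell_2$ is not a scalar multiple of $\ell_1$ (equivalently, $\ell_2$ does not vanish at the point $O^*\in L_\infty$ where $\ell_1$ vanishes). Then the set of singularities of $D$ is either $\{3a_2\}$ (three $a_2$ singular points) or $\{a_2+a_5\}$ (one $a_2$ and one $a_5$ singular point).
   Context: Work in $\mathbb{P}^2$ with homogeneous coordinates $[X:Y:Z]$, $L_\infty=\{Z=0\}$. Let $\ell_1(X,Y)\ne0$, $\ell_2(X,Y)$, $\ell_3(X,Y)$ be linear forms in $X,Y$ and $a_{00},b_{00}\in\mathbb{C}$, and put $F_2=\ell_1^2+\ell_2Z+a_{00}Z^2$, $F_3=\ell_1^3+\tfrac32\ell_1\ell_2Z+\ell_3Z^2+b_{00}Z^3$. Then $F_2^3-F_3^2=Z^2G$ for a homogeneous quartic $G$; assume $G$ is reduced and not divisible by $Z$, and let $D=\{G=0\}$ (an invisible degeneration of a $(2,3)$ torus sextic). $O^*$ denotes the point $[x_0:y_0:0]$ with $\ell_1(x_0,y_0)=0$. For $n\ge1$, $a_n$ is the topological type of the germ $x^2+y^{n+1}=0$. *)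

theory Defs
  imports "HOL-Analysis.Analysis"
begin

text \<open>Points of C^3 (homogeneous coordinates [X:Y:Z] of P^2) are vectors p :: complex^3,
  with X = p$1, Y = p$2, Z = p$3.  Polynomials are rendered as polynomial functions.\<close>

definition lin_form :: "(complex \<Rightarrow> complex \<Rightarrow> complex) \<Rightarrow> bool" where
  "lin_form l \<longleftrightarrow> (\<exists>a b. \<forall>x y. l x y = a * x + b * y)"

definition F2 :: "(complex \<Rightarrow> complex \<Rightarrow> complex) \<Rightarrow> (complex \<Rightarrow> complex \<Rightarrow> complex)
    \<Rightarrow> complex \<Rightarrow> complex^3 \<Rightarrow> complex" where
  "F2 l1 l2 a00 p = (l1 (p$1) (p$2))^2 + l2 (p$1) (p$2) * p$3 + a00 * (p$3)^2"

definition F3 :: "(complex \<Rightarrow> complex \<Rightarrow> complex) \<Rightarrow> (complex \<Rightarrow> complex \<Rightarrow> complex)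
    \<Rightarrow> (complex \<Rightarrow> complex \<Rightarrow> complex) \<Rightarrow> complex \<Rightarrow> complex^3 \<Rightarrow> complex" where
  "F3 l1 l2 l3 b00 p = (l1 (p$1) (p$2))^3 + 3/2 * l1 (p$1) (p$2) * l2 (p$1) (p$2) * p$3
      + l3 (p$1) (p$2) * (p$3)^2 + b00 * (p$3)^3"

text \<open>The quartic G with F2^3 - F3^2 = Z^2 G (identity proved below).\<close>
definition Gq :: "(complex \<Rightarrow> complex \<Rightarrow> complex) \<Rightarrow> (complex \<Rightarrow> complex \<Rightarrow> complex)
    \<Rightarrow> (complex \<Rightarrow> complex \<Rightarrow> complex) \<Rightarrow> complex \<Rightarrow> complex \<Rightarrow> complex^3 \<Rightarrow> complex" where
  "Gq l1 l2 l3 a00 b00 p =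
     (let a = l1 (p$1) (p$2); b = l2 (p$1) (p$2); c = l3 (p$1) (p$2); z = p$3 in
        3 * a00 * a^4 + 3/4 * a^2 * b^2 - 2 * a^3 * c
      + z * (6 * a00 * a^2 * b - 2 * b00 * a^3 - 3 * a * b * c + b^3)
      + z^2 * (3 * a00^2 * a^2 - 3 * b00 * a * b + 3 * a00 * b^2 - c^2)
      + z^3 * (3 * b * a00^2 - 2 * c * b00)
      + z^4 * (a00^3 - b00^2))"

lemma F2_F3_Gq:
  "(F2 l1 l2 a00 p)^3 - (F3 l1 l2 l3 b00 p)^2 = (p$3)^2 * Gq l1 l2 l3 a00 b00 p"
  unfolding F2_def F3_def Gq_def Let_def by (simp add: field_simps power2_eq_square power3_eq_cube power4_eq_xxxx)

definition hpoly :: "nat \<Rightarrow> (complex^3 \<Rightarrow> complex) \<Rightarrow> bool" where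
  "hpoly d f \<longleftrightarrow> (\<exists>c :: nat \<Rightarrow> nat \<Rightarrow> complex. \<forall>p.
      f p = (\<Sum>i\<le>d. \<Sum>j\<le>d - i. c i j * (p$1)^i * (p$2)^j * (p$3)^(d - i - j)))"

definition reduced_quartic :: "(complex^3 \<Rightarrow> complex) \<Rightarrow> bool" where
  "reduced_quartic G \<longleftrightarrow> \<not> (\<exists>d H K. 1 \<le> d \<and> 2 * d \<le> 4 \<and> hpoly d H \<and> hpoly (4 - 2 * d) K
      \<and> (\<exists>p. H p \<noteq> 0) \<and> (\<forall>p. G p = (H p)^2 * K p))"

definition divisible_by_Z :: "(complex^3 \<Rightarrow> complex) \<Rightarrow> bool" where
  "divisible_by_Z G \<longleftrightarrow> (\<exists>K. hpoly 3 K \<and> (\<forall>p. G p = p$3 * K p))"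

definition sing_pt :: "(complex^3 \<Rightarrow> complex) \<Rightarrow> complex^3 \<Rightarrow> bool" where
  "sing_pt G p \<longleftrightarrow> p \<noteq> 0 \<and> G p = 0 \<and>
     (\<forall>i. ((\<lambda>t. G (p + t *s axis i 1)) has_field_derivative 0) (at 0))"

definition proj_eq :: "complex^3 \<Rightarrow> complex^3 \<Rightarrow> bool" where
  "proj_eq p q \<longleftrightarrow> (\<exists>c. c \<noteq> 0 \<and> q = c *s p)"

definition top_equiv_germ :: "(complex \<times> complex \<Rightarrow> complex) \<Rightarrow> (complex \<times> complex \<Rightarrow> complex) \<Rightarrow> bool" where
  "top_equiv_germ f g \<longleftrightarrow> (\<exists>U V h k. open U \<and> open V \<and> (0,0) \<in> U \<and> (0,0) \<in> V
      \<and> homeomorphism U V h k \<and> h (0,0) = (0,0) \<and> (\<forall>w\<in>U. f w = 0 \<longleftrightarrow> g (h w) = 0))"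

text \<open>The germ of D = {G = 0} at the point [p] of P^2 has topological type a_n
  (germ of x^2 + y^(n+1) = 0), read in the affine chart (u,v) \<mapsto> [p + u q + v r]
  where p, q, r is a basis of C^3.\<close>
definition has_type_a :: "(complex^3 \<Rightarrow> complex) \<Rightarrow> complex^3 \<Rightarrow> nat \<Rightarrow> bool" where
  "has_type_a G p n \<longleftrightarrow> (\<exists>q r.
      (\<forall>a b c. a *s p + b *s q + c *s r = 0 \<longrightarrow> a = 0 \<and> b = 0 \<and> c = 0)
      \<and> top_equiv_germ (\<lambda>(u, v). G (p + u *s q + v *s r)) (\<lambda>(x, y). x^2 + y^(n + 1)))"

end

theory Submission
  imports Defs "HOL-Computational_Algebra.Fundamental_Theorem_Algebra"
begin

text \<open>In the coordinates \<open>x = \<ell>\<^sub>1\<close>, \<open>y = \<ell>\<^sub>2 + a\<^sub>0\<^sub>0 Z\<close>, \<open>z = Z\<close>, available because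
  \<open>\<ell>\<^sub>1, \<ell>\<^sub>2\<close> are independent, \<open>G\<close> becomes a normal form \<open>N\<close> with \<open>z\<^sup>2 N = f\<^sup>3 - g\<^sup>2\<close>, where
  \<open>f = x\<^sup>2 + y z\<close>. Its singular points are the points \<open>[r : -r\<^sup>2 : 1]\<close> of the conic \<open>f = 0\<close> at
  which the cubic \<open>H(r) = g/z\<^sup>3\<close> (restricted to the conic) vanishes; a triple root of \<open>H\<close> would make
  \<open>G\<close> a square times a conic, contradicting reducedness. In a chart at a root \<open>r\<close>, \<open>G\<close> reads
  \<open>(u\<^sup>2 + v)\<^sup>3 - (u\<^sup>3 + 3/2 u v + H'(r) u + B v)\<^sup>2\<close>: an \<open>a\<^sub>2\<close> germ at a simple root and an
  \<open>a\<^sub>5\<close> germ at a double root (where \<open>B \<noteq> 0\<close>). Both germ equivalences are given by explicit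
  injective continuous maps, homeomorphisms onto open sets by invariance of domain.\<close>

section \<open>The normal form\<close>

definition nf_conic :: "complex \<Rightarrow> complex \<Rightarrow> complex \<Rightarrow> complex" where
  "nf_conic x y z = x^2 + y*z"

definition nf_cubic_form :: "complex \<Rightarrow> complex \<Rightarrow> complex \<Rightarrow> complex \<Rightarrow> complex \<Rightarrow> complex \<Rightarrow> complex" where
  "nf_cubic_form \<alpha> \<beta> \<gamma> x y z = x^3 + 3/2*x*y*z + \<alpha>*x*z^2 + \<beta>*y*z^2 + \<gamma>*z^3"

text \<open>With \<open>\<ell>\<^sub>3 = c\<^sub>1 \<ell>\<^sub>1 + c\<^sub>2 \<ell>\<^sub>2\<close>, \<open>G\<close> in the coordinates \<open>x, y, z\<close> is \<open>nf_quartic \<alpha> \<beta> \<gamma>\<close>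
  with \<open>\<alpha> = c\<^sub>1 - 3/2 a\<^sub>0\<^sub>0\<close>, \<open>\<beta> = c\<^sub>2\<close>, \<open>\<gamma> = b\<^sub>0\<^sub>0 - c\<^sub>2 a\<^sub>0\<^sub>0\<close>.\<close>
definition nf_quartic :: "complex \<Rightarrow> complex \<Rightarrow> complex \<Rightarrow> complex \<Rightarrow> complex \<Rightarrow> complex \<Rightarrow> complex" where
  "nf_quartic \<alpha> \<beta> \<gamma> x y z = 3/4*x^2*y^2 - 2*\<alpha>*x^4 - 2*\<beta>*x^3*y
     + z*(y^3 - 2*\<gamma>*x^3 - 3*\<alpha>*x^2*y - 3*\<beta>*x*y^2)
     - z^2*(3*\<gamma>*x*y + (\<alpha>*x + \<beta>*y)^2) - 2*\<gamma>*z^3*(\<alpha>*x + \<beta>*y) - \<gamma>^2*z^4"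

definition nf_quartic_dx :: "complex \<Rightarrow> complex \<Rightarrow> complex \<Rightarrow> complex \<Rightarrow> complex \<Rightarrow> complex \<Rightarrow> complex" where
  "nf_quartic_dx \<alpha> \<beta> \<gamma> x y z = 3/2*x*y^2 - 8*\<alpha>*x^3 - 6*\<beta>*x^2*y
     + z*(-6*\<gamma>*x^2 - 6*\<alpha>*x*y - 3*\<beta>*y^2)
     - z^2*(3*\<gamma>*y + 2*\<alpha>*(\<alpha>*x + \<beta>*y)) - 2*\<gamma>*\<alpha>*z^3"

definition nf_quartic_dy :: "complex \<Rightarrow> complex \<Rightarrow> complex \<Rightarrow> complex \<Rightarrow> complex \<Rightarrow> complex \<Rightarrow> complex" where
  "nf_quartic_dy \<alpha> \<beta> \<gamma> x y z = 3/2*x^2*y - 2*\<beta>*x^3 + z*(3*y^2 - 3*\<alpha>*x^2 - 6*\<beta>*x*y)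
     - z^2*(3*\<gamma>*x + 2*\<beta>*(\<alpha>*x + \<beta>*y)) - 2*\<gamma>*\<beta>*z^3"

definition nf_quartic_dz :: "complex \<Rightarrow> complex \<Rightarrow> complex \<Rightarrow> complex \<Rightarrow> complex \<Rightarrow> complex \<Rightarrow> complex" where
  "nf_quartic_dz \<alpha> \<beta> \<gamma> x y z = (y^3 - 2*\<gamma>*x^3 - 3*\<alpha>*x^2*y - 3*\<beta>*x*y^2)
     - 2*z*(3*\<gamma>*x*y + (\<alpha>*x + \<beta>*y)^2) - 6*\<gamma>*z^2*(\<alpha>*x + \<beta>*y) - 4*\<gamma>^2*z^3"

definition nf_cubic :: "complex \<Rightarrow> complex \<Rightarrow> complex \<Rightarrow> complex \<Rightarrow> complex" where
  "nf_cubic \<alpha> \<beta> \<gamma> r = -1/2*r^3 - \<beta>*r^2 + \<alpha>*r + \<gamma>"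

definition nf_cubic_deriv :: "complex \<Rightarrow> complex \<Rightarrow> complex \<Rightarrow> complex" where
  "nf_cubic_deriv \<alpha> \<beta> r = \<alpha> - 2*\<beta>*r - 3/2*r^2"

text \<open>Exactly the case in which \<open>nf_cubic\<close> has a triple root, at \<open>-2\<beta>/3\<close>.\<close>
definition nf_degenerate :: "complex \<Rightarrow> complex \<Rightarrow> complex \<Rightarrow> bool" where
  "nf_degenerate \<alpha> \<beta> \<gamma> \<longleftrightarrow> \<alpha> = -2/3*\<beta>^2 \<and> \<gamma> = -4/27*\<beta>^3"

lemma nf_quartic_torus:
  "z^2 * nf_quartic \<alpha> \<beta> \<gamma> x y z = (nf_conic x y z)^3 - (nf_cubic_form \<alpha> \<beta> \<gamma> x y z)^2"
  unfolding nf_quartic_def nf_conic_def nf_cubic_form_def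
  by (simp add: algebra_simps power2_eq_square power3_eq_cube power4_eq_xxxx)

lemma nf_quartic_dx_torus:
  "z^2 * nf_quartic_dx \<alpha> \<beta> \<gamma> x y z = 6*x*(nf_conic x y z)^2
     - 2*nf_cubic_form \<alpha> \<beta> \<gamma> x y z*(3*x^2 + 3/2*y*z + \<alpha>*z^2)"
  unfolding nf_quartic_dx_def nf_conic_def nf_cubic_form_def
  by (simp add: algebra_simps power2_eq_square power3_eq_cube power4_eq_xxxx)

lemma nf_quartic_dy_torus:
  "z^2 * nf_quartic_dy \<alpha> \<beta> \<gamma> x y z = 3*z*(nf_conic x y z)^2
     - 2*nf_cubic_form \<alpha> \<beta> \<gamma> x y z*(3/2*x*z + \<beta>*z^2)"
  unfolding nf_quartic_dy_def nf_conic_def nf_cubic_form_def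
  by (simp add: algebra_simps power2_eq_square power3_eq_cube power4_eq_xxxx)

lemma has_field_derivative_nf_quartic:
  "((\<lambda>t. nf_quartic \<alpha> \<beta> \<gamma> (x + t*a) (y + t*b) (z + t*c)) has_field_derivative
     nf_quartic_dx \<alpha> \<beta> \<gamma> x y z * a + nf_quartic_dy \<alpha> \<beta> \<gamma> x y z * b + nf_quartic_dz \<alpha> \<beta> \<gamma> x y z * c)
   (at 0)"
  unfolding nf_quartic_def nf_quartic_dx_def nf_quartic_dy_def nf_quartic_dz_def
  by (rule derivative_eq_intros refl | simp)+
     (simp add: algebra_simps power2_eq_square power3_eq_cube power4_eq_xxxx)

lemma nf_singular_at_infinity:
  assumes N: "nf_quartic \<alpha> \<beta> \<gamma> x y 0 = 0" and Y: "nf_quartic_dy \<alpha> \<beta> \<gamma> x y 0 = 0"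
    and Z: "nf_quartic_dz \<alpha> \<beta> \<gamma> x y 0 = 0" and nz: "(x, y) \<noteq> (0, 0)"
  shows "nf_degenerate \<alpha> \<beta> \<gamma>"
proof -
  have Z0: "y^3 - 2*\<gamma>*x^3 - 3*\<alpha>*x^2*y - 3*\<beta>*x*y^2 = 0"
    using Z unfolding nf_quartic_dz_def by simp
  then have x: "x \<noteq> 0" using nz by auto
  have "x^2*(3/2*y - 2*\<beta>*x) = 0"
    using Y unfolding nf_quartic_dy_def by (simp add: algebra_simps power2_eq_square power3_eq_cube)
  then have y: "y = 4/3*\<beta>*x" using x by (simp add: field_simps)
  have "x^2*(3/4*y^2 - 2*\<alpha>*x^2 - 2*\<beta>*x*y) = 0"
    using N unfolding nf_quartic_def by (simp add: algebra_simps power2_eq_square power3_eq_cube power4_eq_xxxx)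
  then have "x^4*(\<alpha> + 2/3*\<beta>^2) = 0" unfolding y by algebra
  then have \<alpha>: "\<alpha> = -2/3*\<beta>^2" using x by (simp add: add_eq_0_iff2)
  have "x^3*(\<gamma> + 4/27*\<beta>^3) = 0" using Z0 unfolding y \<alpha> by algebra
  then show ?thesis unfolding nf_degenerate_def using \<alpha> x by (simp add: add_eq_0_iff2)
qed

text \<open>Off the conic, \<open>f\<^sup>3 = g\<^sup>2\<close> makes \<open>f = t\<^sup>2\<close>, \<open>g = t\<^sup>3\<close>; the gradient equations then pin \<open>t\<close>
  and \<open>y\<close> linearly in \<open>x, z\<close>, which forces the triple-root relations.\<close>
lemma nf_singular_off_conic:
  assumes N: "nf_quartic \<alpha> \<beta> \<gamma> x y z = 0" and X: "nf_quartic_dx \<alpha> \<beta> \<gamma> x y z = 0"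
    and Y: "nf_quartic_dy \<alpha> \<beta> \<gamma> x y z = 0" and z: "z \<noteq> 0" and f: "nf_conic x y z \<noteq> 0"
  shows "nf_degenerate \<alpha> \<beta> \<gamma>"
proof -
  define g where "g = nf_cubic_form \<alpha> \<beta> \<gamma> x y z"
  define t where "t = g / nf_conic x y z"
  have fg: "(nf_conic x y z)^3 = g^2" using nf_quartic_torus[of z \<alpha> \<beta> \<gamma> x y] N g_def by simp
  have ft: "nf_conic x y z = t^2" and gt: "g = t^3"
    using fg f unfolding t_def by (simp_all add: field_simps power2_eq_square power3_eq_cube)
  have t: "t \<noteq> 0" using ft f by auto
  have "3*z*t^4 = 2*t^3*(3/2*x*z + \<beta>*z^2)"
    using nf_quartic_dy_torus[of z \<alpha> \<beta> \<gamma> x y] Y unfolding ft g_def[symmetric] gt by algebra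
  then have "t^3*z*(t - (x + 2/3*\<beta>*z)) = 0" by algebra
  then have tx: "t = x + 2/3*\<beta>*z" using t z by (simp only: mult_eq_0_iff right_minus_eq) simp
  have "6*x*t^4 = 2*t^3*(3*x^2 + 3/2*y*z + \<alpha>*z^2)"
    using nf_quartic_dx_torus[of z \<alpha> \<beta> \<gamma> x y] X unfolding ft g_def[symmetric] gt by algebra
  then have "t^3*z*(y - (4/3*\<beta>*x - 2/3*\<alpha>*z)) = 0" unfolding tx by algebra
  then have y: "y = 4/3*\<beta>*x - 2/3*\<alpha>*z" using t z by (simp only: mult_eq_0_iff right_minus_eq) simp
  have "z^2*(\<alpha> + 2/3*\<beta>^2) = 0" using ft unfolding nf_conic_def tx y by algebra
  then have \<alpha>: "\<alpha> = -2/3*\<beta>^2" using z by (simp add: add_eq_0_iff2)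
  have "z^3*(\<gamma> + 4/27*\<beta>^3) = 0" using gt unfolding g_def nf_cubic_form_def tx y \<alpha> by algebra
  then show ?thesis unfolding nf_degenerate_def using \<alpha> z by (simp add: add_eq_0_iff2)
qed

lemma nf_singular_point_on_conic:
  assumes "nf_quartic \<alpha> \<beta> \<gamma> x y z = 0" "nf_quartic_dx \<alpha> \<beta> \<gamma> x y z = 0"
    "nf_quartic_dy \<alpha> \<beta> \<gamma> x y z = 0" "nf_quartic_dz \<alpha> \<beta> \<gamma> x y z = 0"
    and nz: "(x, y, z) \<noteq> (0, 0, 0)" and nd: "\<not> nf_degenerate \<alpha> \<beta> \<gamma>"
  obtains r where "nf_cubic \<alpha> \<beta> \<gamma> r = 0" "z \<noteq> 0" "x = r*z" "y = -(r^2)*z"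
proof -
  have z: "z \<noteq> 0" using nf_singular_at_infinity[of \<alpha> \<beta> \<gamma> x y] assms by auto
  have f: "nf_conic x y z = 0" using nf_singular_off_conic[of \<alpha> \<beta> \<gamma> x y z] assms z by blast
  define r where "r = x/z"
  have x: "x = r*z" using z unfolding r_def by simp
  have "z*(y + r^2*z) = 0" using f unfolding nf_conic_def x by algebra
  then have y: "y = -(r^2)*z" using z by (simp add: add_eq_0_iff2)
  have "nf_cubic_form \<alpha> \<beta> \<gamma> x y z = 0" using nf_quartic_torus[of z \<alpha> \<beta> \<gamma> x y] assms(1) f by simp
  moreover have "nf_cubic_form \<alpha> \<beta> \<gamma> x y z = z^3 * nf_cubic \<alpha> \<beta> \<gamma> r"
    unfolding nf_cubic_form_def nf_cubic_def x y by algebra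
  ultimately have "nf_cubic \<alpha> \<beta> \<gamma> r = 0" using z by simp
  then show thesis using that z x y by blast
qed

lemma nf_cubic_root_singular:
  assumes "nf_cubic \<alpha> \<beta> \<gamma> r = 0"
  shows "nf_quartic \<alpha> \<beta> \<gamma> r (-(r^2)) 1 = 0" "nf_quartic_dx \<alpha> \<beta> \<gamma> r (-(r^2)) 1 = 0"
    "nf_quartic_dy \<alpha> \<beta> \<gamma> r (-(r^2)) 1 = 0" "nf_quartic_dz \<alpha> \<beta> \<gamma> r (-(r^2)) 1 = 0"
proof -
  have \<gamma>: "\<gamma> = 1/2*r^3 + \<beta>*r^2 - \<alpha>*r" using assms unfolding nf_cubic_def by algebra
  show "nf_quartic \<alpha> \<beta> \<gamma> r (-(r^2)) 1 = 0" "nf_quartic_dx \<alpha> \<beta> \<gamma> r (-(r^2)) 1 = 0"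
    "nf_quartic_dy \<alpha> \<beta> \<gamma> r (-(r^2)) 1 = 0" "nf_quartic_dz \<alpha> \<beta> \<gamma> r (-(r^2)) 1 = 0"
    unfolding nf_quartic_def nf_quartic_dx_def nf_quartic_dy_def nf_quartic_dz_def \<gamma>
    by (simp only: power_one mult_1_right mult_1_left; algebra)+
qed

text \<open>Near a singular point \<open>[r : -r\<^sup>2 : 1]\<close> the quartic is again of torus type, with the linear
  coefficients \<open>H'(r)\<close> and \<open>-H''(r)/2\<close> of \<open>H = nf_cubic \<alpha> \<beta> \<gamma>\<close>.\<close>
lemma nf_quartic_near_root:
  assumes "nf_cubic \<alpha> \<beta> \<gamma> r = 0"
  shows "nf_quartic \<alpha> \<beta> \<gamma> (r + u) (-(r^2) - 2*r*u + v) 1 =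
    (u^2 + v)^3 - (u^3 + 3/2*u * v + nf_cubic_deriv \<alpha> \<beta> r * u + (\<beta> + 3/2*r) * v)^2"
proof -
  have \<gamma>: "\<gamma> = 1/2*r^3 + \<beta>*r^2 - \<alpha>*r" using assms unfolding nf_cubic_def by algebra
  show ?thesis unfolding nf_quartic_def nf_cubic_deriv_def \<gamma>
    by (simp only: power_one mult_1_right mult_1_left) algebra
qed

lemma nf_quartic_degenerate:
  assumes "nf_degenerate \<alpha> \<beta> \<gamma>"
  shows "nf_quartic \<alpha> \<beta> \<gamma> x y z =
    (y - 4/3*\<beta>*x - 4/9*\<beta>^2*z)^2 * (3/4*x^2 + z*(y - 1/3*\<beta>*x - 1/9*\<beta>^2*z))"
  using assms unfolding nf_degenerate_def nf_quartic_def by algebra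

section \<open>Roots of the cubic\<close>

lemma complex_cubic_vieta:
  fixes a b c :: complex
  obtains r1 r2 r3 where "a = -(r1 + r2 + r3)" "b = r1*r2 + r1*r3 + r2*r3" "c = -(r1*r2*r3)"
proof -
  have "\<not> constant (poly [:c, b, a, 1:])" by (simp add: constant_degree)
  then obtain r1 where "poly [:c, b, a, 1:] r1 = 0" using fundamental_theorem_of_algebra by blast
  then have r1: "c + r1*(b + r1*(a + r1)) = 0" by simp
  define p where "p = a + r1"
  define q where "q = b + r1*p"
  define s where "s = csqrt (p^2 - 4*q)"
  have s2: "s^2 = p^2 - 4*q" unfolding s_def by simp
  show ?thesis
  proof (rule that[of r1 "(s - p)/2" "(-s - p)/2"])
    show "a = -(r1 + (s - p)/2 + (-s - p)/2)" unfolding p_def by (simp add: field_simps)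
    show "b = r1*((s - p)/2) + r1*((-s - p)/2) + (s - p)/2*((-s - p)/2)"
      using s2 unfolding q_def p_def by algebra
    show "c = -(r1*((s - p)/2)*((-s - p)/2))" using s2 r1 unfolding q_def p_def by algebra
  qed
qed

lemma nf_cubic_double_root:
  assumes "d \<noteq> s" "2*\<beta> = -(2*d + s)" "2*\<alpha> = -(d^2 + 2*d * s)" "2*\<gamma> = d^2 * s"
  shows "\<And>r. nf_cubic \<alpha> \<beta> \<gamma> r = 0 \<longleftrightarrow> r = d \<or> r = s"
    and "nf_cubic_deriv \<alpha> \<beta> d = 0" "\<beta> + 3/2*d \<noteq> 0" "nf_cubic_deriv \<alpha> \<beta> s \<noteq> 0"
proof -
  have "nf_cubic \<alpha> \<beta> \<gamma> r = -1/2*((r - d)^2*(r - s))" for r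
    unfolding nf_cubic_def using assms(2-4) by algebra
  then show "nf_cubic \<alpha> \<beta> \<gamma> r = 0 \<longleftrightarrow> r = d \<or> r = s" for r by simp
  show "nf_cubic_deriv \<alpha> \<beta> d = 0" unfolding nf_cubic_deriv_def using assms(2-4) by algebra
  show "\<beta> + 3/2*d \<noteq> 0"
  proof
    assume "\<beta> + 3/2*d = 0"
    then have "d - s = 0" using assms(2) by algebra
    then show False using assms(1) by simp
  qed
  have "nf_cubic_deriv \<alpha> \<beta> s = -1/2*(s - d)^2" unfolding nf_cubic_deriv_def using assms(2-4) by algebra
  then show "nf_cubic_deriv \<alpha> \<beta> s \<noteq> 0" using assms by simp
qed

lemma nf_cubic_root_cases:
  assumes nd: "\<not> nf_degenerate \<alpha> \<beta> \<gamma>"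
  obtains (simple) r1 r2 r3 where "r1 \<noteq> r2" "r1 \<noteq> r3" "r2 \<noteq> r3"
      "\<And>r. nf_cubic \<alpha> \<beta> \<gamma> r = 0 \<longleftrightarrow> r = r1 \<or> r = r2 \<or> r = r3"
      "nf_cubic_deriv \<alpha> \<beta> r1 \<noteq> 0" "nf_cubic_deriv \<alpha> \<beta> r2 \<noteq> 0" "nf_cubic_deriv \<alpha> \<beta> r3 \<noteq> 0"
  | (double) d s where "d \<noteq> s" "\<And>r. nf_cubic \<alpha> \<beta> \<gamma> r = 0 \<longleftrightarrow> r = d \<or> r = s"
      "nf_cubic_deriv \<alpha> \<beta> d = 0" "\<beta> + 3/2*d \<noteq> 0" "nf_cubic_deriv \<alpha> \<beta> s \<noteq> 0"
proof -
  obtain r1 r2 r3 where V: "2*\<beta> = -(r1 + r2 + r3)" "-2*\<alpha> = r1*r2 + r1*r3 + r2*r3" "-2*\<gamma> = -(r1*r2*r3)"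
    by (rule complex_cubic_vieta)
  have H: "nf_cubic \<alpha> \<beta> \<gamma> r = -1/2*((r - r1)*(r - r2)*(r - r3))" for r
    unfolding nf_cubic_def using V by algebra
  have H': "nf_cubic_deriv \<alpha> \<beta> r = -1/2*((r - r1)*(r - r2) + (r - r1)*(r - r3) + (r - r2)*(r - r3))" for r
    unfolding nf_cubic_deriv_def using V by algebra
  have double_root: thesis if "d \<noteq> s" "2*\<beta> = -(2*d + s)" "2*\<alpha> = -(d^2 + 2*d * s)" "2*\<gamma> = d^2 * s"
    for d s by (rule double[OF that(1) nf_cubic_double_root[OF that]])
  consider "r1 \<noteq> r2" "r1 \<noteq> r3" "r2 \<noteq> r3" | "r1 = r2" "r1 \<noteq> r3" | "r1 = r3" "r1 \<noteq> r2"
    | "r2 = r3" "r1 \<noteq> r2" | "r1 = r2" "r1 = r3" by blast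
  then show thesis
  proof cases
    case 1
    then show thesis using simple[of r1 r2 r3] H H' by simp
  next
    case 2
    have "2*\<beta> = -(2*r1 + r3)" "2*\<alpha> = -(r1^2 + 2*r1 * r3)" "2*\<gamma> = r1^2 * r3"
      using V \<open>r1 = r2\<close> by algebra+
    then show thesis by (rule double_root[OF \<open>r1 \<noteq> r3\<close>])
  next
    case 3
    have "2*\<beta> = -(2*r1 + r2)" "2*\<alpha> = -(r1^2 + 2*r1 * r2)" "2*\<gamma> = r1^2 * r2"
      using V \<open>r1 = r3\<close> by algebra+
    then show thesis by (rule double_root[OF \<open>r1 \<noteq> r2\<close>])
  next
    case 4
    have "2*\<beta> = -(2*r2 + r1)" "2*\<alpha> = -(r2^2 + 2*r2 * r1)" "2*\<gamma> = r2^2 * r1"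
      using V \<open>r2 = r3\<close> by algebra+
    then show thesis by (rule double_root[OF \<open>r1 \<noteq> r2\<close>[symmetric]])
  next
    case 5
    have "\<alpha> = -2/3*\<beta>^2" using V 5 by algebra
    moreover have "\<gamma> = -4/27*\<beta>^3" using V 5 by algebra
    ultimately have "nf_degenerate \<alpha> \<beta> \<gamma>" unfolding nf_degenerate_def by blast
    then show thesis using nd by blast
  qed
qed

section \<open>Germs of type a2 and a5\<close>

lemma top_equiv_germI:
  fixes h :: "complex \<times> complex \<Rightarrow> complex \<times> complex"
  assumes "open S" "(0, 0) \<in> S" "continuous_on S h" "inj_on h S" "h (0, 0) = (0, 0)"
    and "\<forall>w\<in>S. f w = 0 \<longleftrightarrow> g (h w) = 0"
  shows "top_equiv_germ f g"
proof -
  obtain k where "homeomorphism S (h ` S) h k"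
    using invariance_of_domain_homeomorphism[of S h] assms by auto
  moreover have "open (h ` S)" using invariance_of_domain[of S h] assms by auto
  moreover have "(0, 0) \<in> h ` S" using assms by (metis image_eqI)
  ultimately show ?thesis unfolding top_equiv_germ_def using assms by blast
qed

text \<open>Here \<open>(x, y) = (i g, f)\<close> is itself a local coordinate system, since \<open>\<partial>g/\<partial>u = a \<noteq> 0\<close> at
  the origin; injectivity comes from \<open>g(w\<^sub>1) - g(w\<^sub>2) = (u\<^sub>1 - u\<^sub>2) K(w\<^sub>1, w\<^sub>2)\<close> once \<open>f\<close> agrees.\<close>
lemma top_equiv_germ_a2:
  fixes a b :: complex
  assumes a: "a \<noteq> 0"
  shows "top_equiv_germ (\<lambda>(u, v). (u^2 + v)^3 - (u^3 + 3/2*u * v + a*u + b * v)^2)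
    (\<lambda>(x, y). x^2 + y^(2 + 1))"
proof -
  define K where "K = (\<lambda>(w1 :: complex \<times> complex, w2 :: complex \<times> complex).
      a + 3/2*((fst w1)^2 + snd w1) - b*(fst w1 + fst w2)
        - 1/2*((fst w1)^2 + fst w1 * fst w2 + (fst w2)^2))"
  have "isCont K ((0, 0), (0, 0))" unfolding K_def case_prod_unfold by (intro continuous_intros)
  then have "(K \<longlongrightarrow> K ((0, 0), (0, 0))) (nhds ((0, 0), (0, 0)))"
    by (simp add: isCont_def tendsto_at_iff_tendsto_nhds)
  then have "eventually (\<lambda>w. K w \<noteq> 0) (nhds (0, 0) \<times>\<^sub>F nhds (0, 0))"
    unfolding nhds_prod[symmetric] using a by (intro tendsto_imp_eventually_ne) (auto simp: K_def)
  then obtain Q where Q: "eventually Q (nhds (0, 0))" "\<And>w1 w2. Q w1 \<Longrightarrow> Q w2 \<Longrightarrow> K (w1, w2) \<noteq> 0"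
    unfolding eventually_prod_same by blast
  then obtain S where S: "open S" "(0, 0) \<in> S" "\<And>w. w \<in> S \<Longrightarrow> Q w"
    unfolding eventually_nhds by blast
  define h where "h = (\<lambda>(u :: complex, v :: complex). (\<i> * (u^3 + 3/2*u * v + a*u + b * v), u^2 + v))"
  show ?thesis
  proof (rule top_equiv_germI[OF S(1,2), of h])
    show "continuous_on S h" unfolding h_def case_prod_unfold by (intro continuous_intros)
    show "h (0, 0) = (0, 0)" unfolding h_def by simp
    have "\<And>F G :: complex. (\<i>*G)^2 + F^(2 + 1) = F^3 - G^2" by (simp add: power_mult_distrib)
    then show "\<forall>w\<in>S. (\<lambda>(u, v). (u^2 + v)^3 - (u^3 + 3/2*u * v + a*u + b * v)^2) w = 0
        \<longleftrightarrow> (\<lambda>(x, y). x^2 + y^(2 + 1)) (h w) = 0"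
      unfolding h_def by auto
    show "inj_on h S"
    proof (rule inj_onI, clarify)
      fix u1 v1 u2 v2 assume w: "(u1, v1) \<in> S" "(u2, v2) \<in> S" and eq: "h (u1, v1) = h (u2, v2)"
      have v2: "v2 = u1^2 + v1 - u2^2" using eq unfolding h_def by (simp add: algebra_simps)
      have "u1^3 + 3/2*u1 * v1 + a*u1 + b * v1 = u2^3 + 3/2*u2 * v2 + a*u2 + b * v2"
        using eq unfolding h_def by simp
      then have "(u1 - u2) * K ((u1, v1), (u2, v2)) = 0" unfolding K_def v2 by simp algebra
      moreover have "K ((u1, v1), (u2, v2)) \<noteq> 0" using Q(2) S(3) w by blast
      ultimately show "u1 = u2 \<and> v1 = v2" using v2 by simp
    qed
  qed
qed

text \<open>The branch \<open>c(u) = u\<^sup>3 e(u)\<close> of \<open>c\<^sup>2 + q(u) c = 2 b u\<^sup>3\<close>, \<open>q(u) = 3/4 u\<^sup>2 - 3 b u - b\<^sup>2\<close>,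
  chosen by the quadratic formula with the principal square root.\<close>
lemma a5_branch:
  fixes b :: complex
  assumes b: "b \<noteq> 0"
  obtains U e where "open U" "0 \<in> U" "continuous_on U e" "\<And>u. u \<in> U \<Longrightarrow> e u \<noteq> 0"
    "\<And>u. u \<in> U \<Longrightarrow> (u^3 * e u)^2 + (3/4*u^2 - 3*b*u - b^2) * (u^3 * e u) = 2*b*u^3"
proof -
  define q where "q u = 3/4*u^2 - 3*b*u - b^2" for u :: complex
  define r where "r u = 1 + 8*b*u^3/(q u)^2" for u
  define s where "s u = csqrt (r u)" for u
  define e where "e u = 4*b/(q u * (1 + s u))" for u
  have s1: "1 + s u \<noteq> 0" for u
  proof -
    have "0 \<le> Re (s u)" unfolding s_def by (rule Re_csqrt)
    then have "Re (1 + s u) \<noteq> 0" by simp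
    then show ?thesis by (metis zero_complex.sel(1))
  qed
  have q0: "q 0 \<noteq> 0" using b unfolding q_def by simp
  have q_cont: "isCont q u" for u unfolding q_def by (intro continuous_intros)
  have r_cont: "isCont r u" if "q u \<noteq> 0" for u
    unfolding r_def using q_cont that by (intro continuous_intros) auto
  have e_cont: "isCont e u" if "q u \<noteq> 0" "0 < Re (r u)" for u
  proof -
    have "r u \<notin> \<real>\<^sub>\<le>\<^sub>0" using that(2) by (auto simp: complex_nonpos_Reals_iff)
    then have "isCont s u" unfolding s_def using r_cont that(1) by (intro isCont_csqrt')
    then show ?thesis unfolding e_def using q_cont s1 that(1) by (intro continuous_intros) auto
  qed
  have "eventually (\<lambda>u. q u \<noteq> 0) (nhds 0)"
    using q_cont[of 0] q0 by (intro tendsto_imp_eventually_ne) (simp add: isCont_def tendsto_at_iff_tendsto_nhds)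
  moreover have "eventually (\<lambda>u. 0 < Re (r u)) (nhds 0)"
  proof -
    have "((\<lambda>u. Re (r u)) \<longlongrightarrow> Re (r 0)) (nhds 0)"
      using r_cont[OF q0] by (intro tendsto_intros) (simp add: isCont_def tendsto_at_iff_tendsto_nhds)
    then show ?thesis by (rule order_tendstoD) (simp add: r_def)
  qed
  ultimately have "eventually (\<lambda>u. q u \<noteq> 0 \<and> 0 < Re (r u)) (nhds 0)" by eventually_elim simp
  then obtain U where U: "open U" "0 \<in> U" "\<And>u. u \<in> U \<Longrightarrow> q u \<noteq> 0 \<and> 0 < Re (r u)"
    unfolding eventually_nhds by blast
  show thesis
  proof (rule that[OF U(1,2)])
    show "continuous_on U e" using U(3) e_cont by (intro continuous_at_imp_continuous_on) blast
    fix u assume "u \<in> U"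
    then have qu: "q u \<noteq> 0" using U(3) by blast
    then show "e u \<noteq> 0" unfolding e_def using b s1 by simp
    have "(q u * (1 + s u))^2 * ((u^3 * e u)^2 + q u * (u^3 * e u) - 2*b*u^3) = 0"
    proof -
      have "(q u)^2 * (s u)^2 = (q u)^2 + 8*b*u^3" unfolding s_def power2_csqrt r_def using qu
        by (simp add: field_simps)
      moreover have "u^3 * e u * (q u * (1 + s u)) = 4*b*u^3" unfolding e_def using qu s1 by simp
      ultimately show ?thesis by algebra
    qed
    then show "(u^3 * e u)^2 + (3/4*u^2 - 3*b*u - b^2) * (u^3 * e u) = 2*b*u^3"
      using qu s1 unfolding q_def[symmetric] by simp
  qed
qed

text \<open>With \<open>c = u\<^sup>3 e\<close> from \<open>a5_branch\<close> the curve splits as \<open>v (v - c) (v + q + c)\<close>, the last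
  factor being a unit at the origin, and \<open>(x, y) = (i u\<^sup>3 - 2 i v / e, u)\<close> gives
  \<open>x\<^sup>2 + y\<^sup>6 = 4 v (c - v) / e\<^sup>2\<close>.\<close>
lemma top_equiv_germ_a5:
  fixes b :: complex
  assumes b: "b \<noteq> 0"
  shows "top_equiv_germ (\<lambda>(u, v). (u^2 + v)^3 - (u^3 + 3/2*u * v + b * v)^2)
    (\<lambda>(x, y). x^2 + y^(5 + 1))"
proof -
  obtain U e where U: "open U" "0 \<in> U" "continuous_on U e" "\<And>u. u \<in> U \<Longrightarrow> e u \<noteq> 0"
    and c: "\<And>u. u \<in> U \<Longrightarrow> (u^3 * e u)^2 + (3/4*u^2 - 3*b*u - b^2) * (u^3 * e u) = 2*b*u^3"
    using a5_branch[OF b] by blast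
  define unit where "unit w = snd w + (3/4*(fst w)^2 - 3*b*fst w - b^2) + (fst w)^3 * e (fst w)"
    for w :: "complex \<times> complex"
  define S where "S = (U \<times> UNIV) \<inter> unit -` (- {0})"
  have e_fst: "continuous_on (U \<times> UNIV) (\<lambda>w. e (fst w))"
    using U(3) by (rule continuous_on_compose2) (auto intro: continuous_intros)
  define h where "h = (\<lambda>(u, v). (\<i> * u^3 - 2*\<i> * v / e u, u))"
  have "open S" unfolding S_def unit_def using U(1) e_fst
    by (intro continuous_open_preimage continuous_intros open_Times) auto
  moreover have "(0, 0) \<in> S" unfolding S_def unit_def using U(2) b by simp
  ultimately show ?thesis
  proof (rule top_equiv_germI)
    show "continuous_on S h" unfolding h_def case_prod_unfold
      using U(4) by (intro continuous_intros continuous_on_subset[OF e_fst]) (auto simp: S_def)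
    show "h (0, 0) = (0, 0)" unfolding h_def by simp
    show "inj_on h S"
      by (rule inj_onI) (auto simp: h_def S_def U(4) field_simps)
    show "\<forall>w\<in>S. (\<lambda>(u, v). (u^2 + v)^3 - (u^3 + 3/2*u * v + b * v)^2) w = 0
        \<longleftrightarrow> (\<lambda>(x, y). x^2 + y^(5 + 1)) (h w) = 0"
      unfolding h_def
    proof (clarify)
      fix u v assume "(u, v) \<in> S"
      then have u: "u \<in> U" and unit: "unit (u, v) \<noteq> 0" unfolding S_def by auto
      have "(u^2 + v)^3 - (u^3 + 3/2*u * v + b * v)^2 = v * (v - u^3 * e u) * unit (u, v)"
        using c[OF u] unfolding unit_def by simp algebra
      moreover have "(\<i> * u^3 - 2*\<i> * v / e u)^2 + u^(5 + 1) = 4 * v * (u^3 * e u - v) / (e u)^2"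
        using U(4)[OF u] by (simp add: field_simps power2_eq_square)
      ultimately show "(u^2 + v)^3 - (u^3 + 3/2*u * v + b * v)^2 = 0
          \<longleftrightarrow> (\<i> * u^3 - 2*\<i> * v / e u)^2 + u^(5 + 1) = 0"
        using unit U(4)[OF u] by auto
    qed
  qed
qed

section \<open>Homogeneous forms\<close>

lemma hpoly_linear: "hpoly 1 (\<lambda>p. k1*p$1 + k2*p$2 + k3*p$3)"
  unfolding hpoly_def
  by (rule exI[of _ "\<lambda>i j. if i = 1 then k1 else if j = 1 then k2 else k3"])
     (simp add: numeral_2_eq_2 algebra_simps)

lemma hpoly_mult_linear:
  "hpoly 2 (\<lambda>p. (k1*p$1 + k2*p$2 + k3*p$3) * (m1*p$1 + m2*p$2 + m3*p$3))"
  unfolding hpoly_def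
  by (rule exI[of _ "\<lambda>i j. if i = 2 then k1*m1
      else if i = 1 then (if j = 1 then k1*m2 + k2*m1 else k1*m3 + k3*m1)
      else (if j = 2 then k2*m2 else if j = 1 then k2*m3 + k3*m2 else k3*m3)"])
     (simp add: numeral_2_eq_2 algebra_simps power2_eq_square)

lemma hpoly_add: "hpoly d f \<Longrightarrow> hpoly d g \<Longrightarrow> hpoly d (\<lambda>p. f p + g p)"
  unfolding hpoly_def
proof (elim exE)
  fix c c' assume "\<forall>p. f p = (\<Sum>i\<le>d. \<Sum>j\<le>d - i. c i j * p$1^i * p$2^j * p$3^(d - i - j))"
    and "\<forall>p. g p = (\<Sum>i\<le>d. \<Sum>j\<le>d - i. c' i j * p$1^i * p$2^j * p$3^(d - i - j))"
  then show "\<exists>c. \<forall>p. f p + g p = (\<Sum>i\<le>d. \<Sum>j\<le>d - i. c i j * p$1^i * p$2^j * p$3^(d - i - j))"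
    by (intro exI[of _ "\<lambda>i j. c i j + c' i j"]) (simp add: algebra_simps sum.distrib)
qed

lemma hpoly_cmult: "hpoly d f \<Longrightarrow> hpoly d (\<lambda>p. a * f p)"
  unfolding hpoly_def
proof (elim exE)
  fix c assume "\<forall>p. f p = (\<Sum>i\<le>d. \<Sum>j\<le>d - i. c i j * p$1^i * p$2^j * p$3^(d - i - j))"
  then show "\<exists>c. \<forall>p. a * f p = (\<Sum>i\<le>d. \<Sum>j\<le>d - i. c i j * p$1^i * p$2^j * p$3^(d - i - j))"
    by (intro exI[of _ "\<lambda>i j. a * c i j"]) (simp add: algebra_simps sum_distrib_left)
qed

section \<open>Singular points in normal coordinates\<close>

lemma axis_nth: "axis i (1 :: complex) $ k = (if k = i then 1 else 0)"
  unfolding axis_def by simp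

locale nf_coordinates =
  fixes G :: "complex^3 \<Rightarrow> complex" and a1 b1 a2 b2 a00 \<alpha> \<beta> \<gamma> :: complex
  assumes G_eq: "\<And>p. G p = nf_quartic \<alpha> \<beta> \<gamma> (a1*p$1 + b1*p$2) (a2*p$1 + b2*p$2 + a00*p$3) (p$3)"
    and det_nonzero: "a1*b2 - a2*b1 \<noteq> 0"
begin

definition nf_point :: "complex \<Rightarrow> complex \<Rightarrow> complex \<Rightarrow> complex^3" where
  "nf_point x y z = vector [inverse (a1*b2 - a2*b1) * (b2*x - b1*(y - a00*z)),
     inverse (a1*b2 - a2*b1) * (a1*(y - a00*z) - a2*x), z]"

lemma det_inverse: "inverse (a1*b2 - a2*b1) * (a1*b2 - a2*b1) = 1"
  using det_nonzero by simp

lemma nf_point_coords: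
  "a1 * nf_point x y z $ 1 + b1 * nf_point x y z $ 2 = x"
  "a2 * nf_point x y z $ 1 + b2 * nf_point x y z $ 2 + a00 * nf_point x y z $ 3 = y"
  "nf_point x y z $ 3 = z"
proof -
  show "a1 * nf_point x y z $ 1 + b1 * nf_point x y z $ 2 = x"
    using det_inverse unfolding nf_point_def by simp algebra
  show "a2 * nf_point x y z $ 1 + b2 * nf_point x y z $ 2 + a00 * nf_point x y z $ 3 = y"
    using det_inverse unfolding nf_point_def by simp algebra
  show "nf_point x y z $ 3 = z" unfolding nf_point_def by simp
qed

lemma G_nf_point: "G (nf_point x y z) = nf_quartic \<alpha> \<beta> \<gamma> x y z"
  unfolding G_eq by (subst nf_point_coords(2)) (simp only: nf_point_coords)

lemma nf_point_add: "nf_point x y z + nf_point x' y' z' = nf_point (x + x') (y + y') (z + z')"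
  unfolding nf_point_def vec_eq_iff forall_3 by (simp add: algebra_simps)

lemma nf_point_scale: "c *s nf_point x y z = nf_point (c*x) (c*y) (c*z)"
  unfolding nf_point_def vec_eq_iff forall_3 by (simp add: algebra_simps)

lemma nf_point_of_coords: "p = nf_point (a1*p$1 + b1*p$2) (a2*p$1 + b2*p$2 + a00*p$3) (p$3)"
  unfolding nf_point_def vec_eq_iff forall_3 using det_inverse by simp algebra

lemma nf_point_eq_0_iff: "nf_point x y z = 0 \<longleftrightarrow> x = 0 \<and> y = 0 \<and> z = 0"
proof
  show "x = 0 \<and> y = 0 \<and> z = 0" if "nf_point x y z = 0"
    using that nf_point_coords[of x y z] by simp
  show "nf_point x y z = 0" if "x = 0 \<and> y = 0 \<and> z = 0"
    using that unfolding nf_point_def vec_eq_iff forall_3 by simp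
qed

lemma has_field_derivative_G_line:
  "((\<lambda>t. G (nf_point x y z + t *s w)) has_field_derivative
     nf_quartic_dx \<alpha> \<beta> \<gamma> x y z * (a1*w$1 + b1*w$2)
   + nf_quartic_dy \<alpha> \<beta> \<gamma> x y z * (a2*w$1 + b2*w$2 + a00*w$3)
   + nf_quartic_dz \<alpha> \<beta> \<gamma> x y z * w$3) (at 0)"
proof -
  have "a1 * (nf_point x y z + t *s w)$1 + b1 * (nf_point x y z + t *s w)$2 = x + t*(a1*w$1 + b1*w$2)"
    "a2 * (nf_point x y z + t *s w)$1 + b2 * (nf_point x y z + t *s w)$2
       + a00 * (nf_point x y z + t *s w)$3 = y + t*(a2*w$1 + b2*w$2 + a00*w$3)"
    "(nf_point x y z + t *s w)$3 = z + t*w$3" for t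
    using nf_point_coords[of x y z] by (simp_all add: algebra_simps)
  then show ?thesis unfolding G_eq by (simp only: has_field_derivative_nf_quartic)
qed

lemma sing_pt_nf_point_iff:
  "sing_pt G (nf_point x y z) \<longleftrightarrow> (x, y, z) \<noteq> (0, 0, 0) \<and> nf_quartic \<alpha> \<beta> \<gamma> x y z = 0
     \<and> nf_quartic_dx \<alpha> \<beta> \<gamma> x y z = 0 \<and> nf_quartic_dy \<alpha> \<beta> \<gamma> x y z = 0
     \<and> nf_quartic_dz \<alpha> \<beta> \<gamma> x y z = 0" (is "_ \<longleftrightarrow> ?nz \<and> ?N \<and> ?X \<and> ?Y \<and> ?Z")
proof -
  let ?d = "\<lambda>i :: 3. nf_quartic_dx \<alpha> \<beta> \<gamma> x y z * (a1*axis i 1$1 + b1*axis i 1$2)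
   + nf_quartic_dy \<alpha> \<beta> \<gamma> x y z * (a2*axis i 1$1 + b2*axis i 1$2 + a00*axis i 1$3)
   + nf_quartic_dz \<alpha> \<beta> \<gamma> x y z * axis i (1 :: complex)$3"
  have crit_iff: "(\<forall>i. ?d i = 0) \<longleftrightarrow> ?X \<and> ?Y \<and> ?Z"
  proof
    assume "\<forall>i. ?d i = 0"
    then have "?d 1 = 0" "?d 2 = 0" "?d 3 = 0" by blast+
    then have e: "nf_quartic_dx \<alpha> \<beta> \<gamma> x y z * a1 + nf_quartic_dy \<alpha> \<beta> \<gamma> x y z * a2 = 0"
      "nf_quartic_dx \<alpha> \<beta> \<gamma> x y z * b1 + nf_quartic_dy \<alpha> \<beta> \<gamma> x y z * b2 = 0"
      "nf_quartic_dy \<alpha> \<beta> \<gamma> x y z * a00 + nf_quartic_dz \<alpha> \<beta> \<gamma> x y z = 0"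
      by (simp_all add: axis_nth)
    have "(a1*b2 - a2*b1) * nf_quartic_dx \<alpha> \<beta> \<gamma> x y z = 0"
      "(a1*b2 - a2*b1) * nf_quartic_dy \<alpha> \<beta> \<gamma> x y z = 0" using e(1,2) by algebra+
    then show "?X \<and> ?Y \<and> ?Z" using e(3) det_nonzero by simp
  qed (simp add: axis_nth)
  have "(\<forall>i. ((\<lambda>t. G (nf_point x y z + t *s axis i 1)) has_field_derivative 0) (at 0))
      \<longleftrightarrow> (\<forall>i. ?d i = 0)"
  proof (intro iffI allI)
    fix i assume "\<forall>i. ((\<lambda>t. G (nf_point x y z + t *s axis i 1)) has_field_derivative 0) (at 0)"
    then show "?d i = 0" using DERIV_unique[OF has_field_derivative_G_line] by blast
  next
    fix i assume "\<forall>i. ?d i = 0"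
    then show "((\<lambda>t. G (nf_point x y z + t *s axis i 1)) has_field_derivative 0) (at 0)"
      using has_field_derivative_G_line[of x y z "axis i 1"] by simp
  qed
  then show ?thesis unfolding sing_pt_def crit_iff G_nf_point nf_point_eq_0_iff by auto
qed

definition conic_point :: "complex \<Rightarrow> complex^3" where
  "conic_point r = nf_point r (-(r^2)) 1"

lemma sing_pt_conic_point: "nf_cubic \<alpha> \<beta> \<gamma> r = 0 \<Longrightarrow> sing_pt G (conic_point r)"
  unfolding conic_point_def sing_pt_nf_point_iff using nf_cubic_root_singular by simp

lemma sing_pt_imp_conic_point:
  assumes "\<not> nf_degenerate \<alpha> \<beta> \<gamma>" and "sing_pt G p"
  obtains r where "nf_cubic \<alpha> \<beta> \<gamma> r = 0" "proj_eq (conic_point r) p"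
proof -
  define x y z where "x = a1*p$1 + b1*p$2" and "y = a2*p$1 + b2*p$2 + a00*p$3" and "z = p$3"
  have p: "p = nf_point x y z" unfolding x_def y_def z_def by (rule nf_point_of_coords)
  obtain r where r: "nf_cubic \<alpha> \<beta> \<gamma> r = 0" "z \<noteq> 0" "x = r*z" "y = -(r^2)*z"
    using assms(2) nf_singular_point_on_conic[OF _ _ _ _ _ assms(1)] unfolding p sing_pt_nf_point_iff
    by metis
  have "p = z *s conic_point r" unfolding p conic_point_def nf_point_scale r(3,4) by (simp add: mult.commute)
  then show thesis using that r(1,2) unfolding proj_eq_def by blast
qed

lemma sing_pt_proj_eq_root:
  assumes "\<not> nf_degenerate \<alpha> \<beta> \<gamma>" and "\<And>r. nf_cubic \<alpha> \<beta> \<gamma> r = 0 \<Longrightarrow> r \<in> R"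
    and "sing_pt G p"
  shows "\<exists>r\<in>R. proj_eq (conic_point r) p"
proof -
  obtain r where "nf_cubic \<alpha> \<beta> \<gamma> r = 0" "proj_eq (conic_point r) p"
    using sing_pt_imp_conic_point[OF assms(1,3)] .
  then show ?thesis using assms(2) by blast
qed

lemma proj_eq_conic_point_iff: "proj_eq (conic_point r) (conic_point r') \<longleftrightarrow> r = r'"
proof
  assume "proj_eq (conic_point r) (conic_point r')"
  then obtain c where "nf_point r' (-(r'^2)) 1 = nf_point (c*r) (c*(-(r^2))) (c*1)"
    unfolding proj_eq_def conic_point_def nf_point_scale by blast
  from arg_cong[OF this, of "\<lambda>p. a1*p$1 + b1*p$2"] arg_cong[OF this, of "\<lambda>p. p$3"]
  show "r = r'" unfolding nf_point_coords by simp
qed (auto simp: proj_eq_def intro: exI[of _ 1])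

lemma has_type_a_conic_point:
  assumes "nf_cubic \<alpha> \<beta> \<gamma> r = 0"
    and "top_equiv_germ (\<lambda>(u, v). (u^2 + v)^3 - (u^3 + 3/2*u * v + nf_cubic_deriv \<alpha> \<beta> r * u
      + (\<beta> + 3/2*r) * v)^2) (\<lambda>(x, y). x^2 + y^(n + 1))"
  shows "has_type_a G (conic_point r) n"
proof -
  define q s where "q = nf_point 1 (-2*r) 0" and "s = nf_point 0 1 0"
  have "a = 0 \<and> b = 0 \<and> c = 0" if "a *s conic_point r + b *s q + c *s s = 0" for a b c
  proof -
    from that have "nf_point (a*r + b) (-(a*r^2) - 2*b*r + c) a = 0"
      unfolding q_def s_def conic_point_def nf_point_scale nf_point_add by (simp add: algebra_simps)
    then have "a = 0" "a*r + b = 0" "-(a*r^2) - 2*b*r + c = 0" unfolding nf_point_eq_0_iff by blast+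
    then show ?thesis by simp
  qed
  moreover have "(\<lambda>(u, v). G (conic_point r + u *s q + v *s s)) =
      (\<lambda>(u, v). nf_quartic \<alpha> \<beta> \<gamma> (r + u) (-(r^2) - 2*r*u + v) 1)"
    unfolding q_def s_def conic_point_def nf_point_scale nf_point_add G_nf_point
    by (simp add: algebra_simps)
  then have "top_equiv_germ (\<lambda>(u, v). G (conic_point r + u *s q + v *s s)) (\<lambda>(x, y). x^2 + y^(n + 1))"
    unfolding nf_quartic_near_root[OF assms(1)] using assms(2) by simp
  ultimately show ?thesis unfolding has_type_a_def by blast
qed

lemma not_reduced_if_degenerate:
  assumes "nf_degenerate \<alpha> \<beta> \<gamma>"
  shows "\<not> reduced_quartic G"
proof -
  define H where "H p = (a2 - 4/3*\<beta>*a1)*p$1 + (b2 - 4/3*\<beta>*b1)*p$2 + (a00 - 4/9*\<beta>^2)*p$3"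
    for p :: "complex^3"
  define K where "K p = 3/4 * ((a1*p$1 + b1*p$2 + 0*p$3) * (a1*p$1 + b1*p$2 + 0*p$3))
       + (0*p$1 + 0*p$2 + 1*p$3) * ((a2 - 1/3*\<beta>*a1)*p$1 + (b2 - 1/3*\<beta>*b1)*p$2 + (a00 - 1/9*\<beta>^2)*p$3)"
    for p :: "complex^3"
  have "hpoly 1 H" unfolding H_def by (rule hpoly_linear)
  moreover have "hpoly 2 K" unfolding K_def by (intro hpoly_add hpoly_cmult hpoly_mult_linear)
  moreover have "G p = (H p)^2 * K p" for p
    unfolding G_eq nf_quartic_degenerate[OF assms] H_def K_def by algebra
  moreover have "\<exists>p. H p \<noteq> 0"
  proof (rule ccontr)
    assume "\<not> (\<exists>p. H p \<noteq> 0)"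
    then have "H (axis 1 1) = 0" "H (axis 2 1) = 0" by auto
    then have "a2 - 4/3*\<beta>*a1 = 0" "b2 - 4/3*\<beta>*b1 = 0" unfolding H_def by (simp_all add: axis_nth)
    then have "a1*b2 - a2*b1 = 0" by algebra
    then show False using det_nonzero by simp
  qed
  ultimately have "\<exists>d H K. 1 \<le> d \<and> 2 * d \<le> 4 \<and> hpoly d H \<and> hpoly (4 - 2 * d) K
      \<and> (\<exists>p. H p \<noteq> 0) \<and> (\<forall>p. G p = (H p)^2 * K p)"
    by (intro exI[of _ "1 :: nat"] exI[of _ H] exI[of _ K]) simp
  then show ?thesis unfolding reduced_quartic_def by blast
qed

theorem singular_points_classification:
  assumes "reduced_quartic G"
  shows "(\<exists>p1 p2 p3.
            sing_pt G p1 \<and> sing_pt G p2 \<and> sing_pt G p3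
          \<and> \<not> proj_eq p1 p2 \<and> \<not> proj_eq p1 p3 \<and> \<not> proj_eq p2 p3
          \<and> has_type_a G p1 2 \<and> has_type_a G p2 2 \<and> has_type_a G p3 2
          \<and> (\<forall>p. sing_pt G p \<longrightarrow> proj_eq p1 p \<or> proj_eq p2 p \<or> proj_eq p3 p))
       \<or> (\<exists>p1 p2.
            sing_pt G p1 \<and> sing_pt G p2 \<and> \<not> proj_eq p1 p2
          \<and> has_type_a G p1 2 \<and> has_type_a G p2 5
          \<and> (\<forall>p. sing_pt G p \<longrightarrow> proj_eq p1 p \<or> proj_eq p2 p))"
proof -
  have nd: "\<not> nf_degenerate \<alpha> \<beta> \<gamma>" using assms not_reduced_if_degenerate by blast
  have a2: "has_type_a G (conic_point r) 2" if "nf_cubic \<alpha> \<beta> \<gamma> r = 0" "nf_cubic_deriv \<alpha> \<beta> r \<noteq> 0" for r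
    using that by (intro has_type_a_conic_point top_equiv_germ_a2)
  from nd show ?thesis
  proof (cases rule: nf_cubic_root_cases)
    case (simple r1 r2 r3)
    have sing: "sing_pt G (conic_point r1)" "sing_pt G (conic_point r2)" "sing_pt G (conic_point r3)"
      using simple(4) by (simp_all add: sing_pt_conic_point)
    have types: "has_type_a G (conic_point r1) 2" "has_type_a G (conic_point r2) 2"
      "has_type_a G (conic_point r3) 2" using simple by (simp_all add: a2)
    have covered: "\<forall>p. sing_pt G p \<longrightarrow>
        proj_eq (conic_point r1) p \<or> proj_eq (conic_point r2) p \<or> proj_eq (conic_point r3) p"
      using sing_pt_proj_eq_root[OF nd, of "{r1, r2, r3}"] simple(4) by auto
    show ?thesis
      by (intro disjI1 exI[of _ "conic_point r1"] exI[of _ "conic_point r2"] exI[of _ "conic_point r3"])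
        (simp add: sing types covered proj_eq_conic_point_iff simple(1-3))
  next
    case (double d s)
    have sing: "sing_pt G (conic_point s)" "sing_pt G (conic_point d)"
      using double(2) by (simp_all add: sing_pt_conic_point)
    have type_s: "has_type_a G (conic_point s) 2" using double by (simp add: a2)
    have "top_equiv_germ (\<lambda>(u, v). (u^2 + v)^3 - (u^3 + 3/2*u * v + nf_cubic_deriv \<alpha> \<beta> d * u
        + (\<beta> + 3/2*d) * v)^2) (\<lambda>(x, y). x^2 + y^(5 + 1))"
      using top_equiv_germ_a5[OF double(4)] double(3) by simp
    then have type_d: "has_type_a G (conic_point d) 5"
      using double(2) by (simp add: has_type_a_conic_point)
    have covered: "\<forall>p. sing_pt G p \<longrightarrow> proj_eq (conic_point s) p \<or> proj_eq (conic_point d) p"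
      using sing_pt_proj_eq_root[OF nd, of "{d, s}"] double(2) by auto
    show ?thesis
      by (intro disjI2 exI[of _ "conic_point s"] exI[of _ "conic_point d"])
        (simp add: sing type_s type_d covered proj_eq_conic_point_iff double(1)[symmetric])
  qed
qed

end

lemma Gq_eq_nf_quartic:
  assumes "\<And>x y. l3 x y = c1 * l1 x y + c2 * l2 x y"
  shows "Gq l1 l2 l3 a00 b00 p = nf_quartic (c1 - 3/2*a00) c2 (b00 - c2*a00)
    (l1 (p$1) (p$2)) (l2 (p$1) (p$2) + a00*p$3) (p$3)"
  unfolding Gq_def Let_def assms nf_quartic_def by algebra

lemma det_nonzero_if_not_proportional:
  fixes l1 l2 :: "complex \<Rightarrow> complex \<Rightarrow> complex"
  assumes l1: "\<And>x y. l1 x y = a1*x + b1*y" and l2: "\<And>x y. l2 x y = a2*x + b2*y"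
    and "\<exists>x y. l1 x y \<noteq> 0" and "\<not> (\<exists>c. \<forall>x y. l2 x y = c * l1 x y)"
  shows "a1*b2 - a2*b1 \<noteq> 0"
proof
  assume det: "a1*b2 - a2*b1 = 0"
  have "a1 \<noteq> 0 \<or> b1 \<noteq> 0"
  proof (rule ccontr)
    assume "\<not> (a1 \<noteq> 0 \<or> b1 \<noteq> 0)"
    then have "l1 x y = 0" for x y unfolding l1 by simp
    then show False using assms(3) by blast
  qed
  then have "\<exists>c. \<forall>x y. l2 x y = c * l1 x y"
  proof
    assume "a1 \<noteq> 0"
    then have "l2 x y = a2/a1 * l1 x y" for x y
      using det unfolding l1 l2 by (simp add: field_simps)
    then show ?thesis by blast
  next
    assume "b1 \<noteq> 0"
    then have "l2 x y = b2/b1 * l1 x y" for x y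
      using det unfolding l1 l2 by (simp add: field_simps)
    then show ?thesis by blast
  qed
  then show False using assms(4) by blast
qed

lemma lin_form_combination:
  fixes l1 l2 l3 :: "complex \<Rightarrow> complex \<Rightarrow> complex"
  assumes l1: "\<And>x y. l1 x y = a1*x + b1*y" and l2: "\<And>x y. l2 x y = a2*x + b2*y"
    and det: "a1*b2 - a2*b1 \<noteq> 0" and "lin_form l3"
  obtains c1 c2 where "\<And>x y. l3 x y = c1 * l1 x y + c2 * l2 x y"
proof -
  obtain a3 b3 where l3: "\<And>x y. l3 x y = a3*x + b3*y" using assms(4) unfolding lin_form_def by blast
  have inv: "inverse (a1*b2 - a2*b1) * (a1*b2 - a2*b1) = 1" using det by simp
  have "l3 x y = inverse (a1*b2 - a2*b1) * (a3*b2 - a2*b3) * l1 x y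
      + inverse (a1*b2 - a2*b1) * (a1*b3 - a3*b1) * l2 x y" for x y
    using inv unfolding l1 l2 l3 by algebra
  then show thesis by (rule that)
qed

theorem lemma4:
  fixes l1 l2 l3 :: "complex \<Rightarrow> complex \<Rightarrow> complex" and a00 b00 :: complex
  assumes "lin_form l1" and "lin_form l2" and "lin_form l3"
    and "\<exists>x y. l1 x y \<noteq> 0"
    and "reduced_quartic (Gq l1 l2 l3 a00 b00)"
    and "\<not> divisible_by_Z (Gq l1 l2 l3 a00 b00)"
    and "\<not> (\<exists>c. \<forall>x y. l2 x y = c * l1 x y)"
  shows "(\<exists>p1 p2 p3.
            sing_pt (Gq l1 l2 l3 a00 b00) p1 \<and> sing_pt (Gq l1 l2 l3 a00 b00) p2
          \<and> sing_pt (Gq l1 l2 l3 a00 b00) p3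
          \<and> \<not> proj_eq p1 p2 \<and> \<not> proj_eq p1 p3 \<and> \<not> proj_eq p2 p3
          \<and> has_type_a (Gq l1 l2 l3 a00 b00) p1 2 \<and> has_type_a (Gq l1 l2 l3 a00 b00) p2 2
          \<and> has_type_a (Gq l1 l2 l3 a00 b00) p3 2
          \<and> (\<forall>p. sing_pt (Gq l1 l2 l3 a00 b00) p \<longrightarrow> proj_eq p1 p \<or> proj_eq p2 p \<or> proj_eq p3 p))
       \<or> (\<exists>p1 p2.
            sing_pt (Gq l1 l2 l3 a00 b00) p1 \<and> sing_pt (Gq l1 l2 l3 a00 b00) p2
          \<and> \<not> proj_eq p1 p2
          \<and> has_type_a (Gq l1 l2 l3 a00 b00) p1 2 \<and> has_type_a (Gq l1 l2 l3 a00 b00) p2 5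
          \<and> (\<forall>p. sing_pt (Gq l1 l2 l3 a00 b00) p \<longrightarrow> proj_eq p1 p \<or> proj_eq p2 p))"
proof -
  obtain a1 b1 a2 b2 where l1: "\<And>x y. l1 x y = a1*x + b1*y" and l2: "\<And>x y. l2 x y = a2*x + b2*y"
    using assms(1,2) unfolding lin_form_def by blast
  have det: "a1*b2 - a2*b1 \<noteq> 0" using det_nonzero_if_not_proportional[OF l1 l2 assms(4,7)] .
  obtain c1 c2 where l3: "\<And>x y. l3 x y = c1 * l1 x y + c2 * l2 x y"
    using lin_form_combination[OF l1 l2 det assms(3)] by blast
  interpret nf_coordinates "Gq l1 l2 l3 a00 b00" a1 b1 a2 b2 a00 "c1 - 3/2*a00" c2 "b00 - c2*a00"
    using det by unfold_locales (simp add: Gq_eq_nf_quartic[OF l3] l1 l2)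
  show ?thesis using singular_points_classification[OF assms(5)] .
qed

end
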